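(* Let $N\ge1$, $h,\beta,\epsilon>0$, let $\boldsymbol{\varrho}_{k-1}\in\mathbb{R}^N_{\ge0}$ be a probability vector, $\boldsymbol{\psi}_{k-1}\in\mathbb{R}^N$, and $\boldsymbol{C}_k\in\mathbb{R}^{N\times N}$ with entries in $[0,\infty)$. Let $\boldsymbol{\Gamma}_k:=\exp(-\boldsymbol{C}_k/(2\epsilon))$ and $\boldsymbol{\xi}_{k-1}:=\exp(-\beta\boldsymbol{\psi}_{k-1}-\mathbf{1})$ (entrywise). Then the iteration, for $\ell=1,2,\dots$, $$\boldsymbol{z}_{\ell+1}=\Big(\boldsymbol{\xi}_{k-1}\oslash\big(\boldsymbol{\Gamma}_k^{\top}\big(\boldsymbol{\varrho}_{k-1}\oslash(\boldsymbol{\Gamma}_k\boldsymbol{z}_\ell)\big)\big)\Big)^{\frac{1}{1+\beta\epsilon/h}}$$ (equivalently $\boldsymbol{z}_{\ell+1}=(\boldsymbol{\xi}_{k-1}\oslash(\boldsymbol{\Gamma}_k^\top\boldsymbol{y}_\ell))^{1/(1+\beta\epsilon/h)}$ with $\boldsymbol{y}_\ell=\boldsymbol{\varrho}_{k-1}\oslash(\boldsymbol{\Gamma}_k\boldsymbol{z}_\ell)$) defines a map of $\mathbb{R}^N_{>0}$ into itself that is strictly contractive with respect to the Thompson metric on $\mathbb{R}^N_{>0}$, and it admits a unique fixed point $\boldsymbol{z}^{\rm opt}\in\mathbb{R}^N_{>0}$.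
   Context: Thompson metric on the positive orthant: for $\boldsymbol{z},\tilde{\boldsymbol{z}}\in\mathbb{R}^N_{>0}$, $d_T(\boldsymbol{z},\tilde{\boldsymbol{z}})=\log\max\{\max_i \boldsymbol{z}_i/\tilde{\boldsymbol{z}}_i,\ \max_i\tilde{\boldsymbol{z}}_i/\boldsymbol{z}_i\}$; $(\mathbb{R}^N_{>0},d_T)$ is a complete metric space. Strictly contractive means $d_T(\boldsymbol{\theta}(\boldsymbol{z}),\boldsymbol{\theta}(\tilde{\boldsymbol{z}}))\le c\,d_T(\boldsymbol{z},\tilde{\boldsymbol{z}})$ for some $c<1$. Notation: $\oslash$ is entrywise division; $\exp$ and powers are entrywise; $\mathbf{1}$ is the all-ones vector. (The iteration is the block-coordinate scheme used to solve $\boldsymbol{y}\odot(\boldsymbol{\Gamma}_k\boldsymbol{z})=\boldsymbol{\varrho}_{k-1}$, $\boldsymbol{z}\odot(\boldsymbol{\Gamma}_k^\top\boldsymbol{y})=\boldsymbol{\xi}_{k-1}\odot\boldsymbol{z}^{-\beta\epsilon/h}$ arising in an entropically regularized JKO proximal step.) *)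

theory Defs
  imports "HOL-Analysis.Analysis"
begin

text \<open>Vectors in R^N are rendered as real^'n with 'n a finite index type (N = CARD('n) >= 1).\<close>

definition pos_orthant :: "(real^'n) set" where
  "pos_orthant = {z. \<forall>i. z $ i > 0}"

definition thompson_dist :: "real^'n::finite \<Rightarrow> real^'n \<Rightarrow> real" where
  "thompson_dist z w =
     ln (max (Max (range (\<lambda>i. z $ i / w $ i))) (Max (range (\<lambda>i. w $ i / z $ i))))"

definition Gamma_mat :: "real \<Rightarrow> real^'n^'n \<Rightarrow> real^'n^'n" where
  "Gamma_mat \<epsilon> C = (\<chi> i j. exp (- C $ i $ j / (2 * \<epsilon>)))"

definition xi_vec :: "real \<Rightarrow> real^'n \<Rightarrow> real^'n" where
  "xi_vec \<beta> \<psi> = (\<chi> i. exp (- \<beta> * \<psi> $ i - 1))"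

definition theta_map ::
  "real \<Rightarrow> real \<Rightarrow> real \<Rightarrow> real^'n::finite \<Rightarrow> real^'n \<Rightarrow> real^'n^'n \<Rightarrow> real^'n \<Rightarrow> real^'n" where
  "theta_map h \<beta> \<epsilon> \<rho> \<psi> C z =
    (let \<Gamma> = Gamma_mat \<epsilon> C;
         y = (\<chi> i. \<rho> $ i / (\<Gamma> *v z) $ i);
         g = transpose \<Gamma> *v y
     in (\<chi> j. (xi_vec \<beta> \<psi> $ j / g $ j) powr (1 / (1 + \<beta> * \<epsilon> / h))))"

end

theory Submission
  imports Defs
begin

text \<open>In logarithmic coordinates the Thompson metric is the sup-distance, and the map
  \<open>z \<mapsto> \<Gamma>\<^sup>T (\<rho> \<oslash> \<Gamma> z)\<close> is order preserving and homogeneous of degree \<open>-1\<close>: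
  \<open>w \<le> e\<^sup>D z\<close> entrywise implies that its value at \<open>z\<close> is at most \<open>e\<^sup>D\<close> times its value at \<open>w\<close>.
  Hence it does not increase the Thompson distance, and raising the quotient
  \<open>\<xi> \<oslash> \<Gamma>\<^sup>T (\<rho> \<oslash> \<Gamma> z)\<close> to the power \<open>c = 1/(1 + \<beta>\<epsilon>/h) < 1\<close> multiplies log-coordinates,
  and so distances, by \<open>c\<close>. The positive orthant is complete for this metric, being isometric
  to \<open>\<real>\<^sup>N\<close> with the sup-norm, so Banach's fixed point theorem applies.\<close>

definition log_dist :: "real^'n::finite \<Rightarrow> real^'n \<Rightarrow> real" where
  "log_dist z w = Max (range (\<lambda>i. \<bar>ln (z $ i) - ln (w $ i)\<bar>))"

lemma abs_ln_diff_le_log_dist: "\<bar>ln (z $ i) - ln (w $ i)\<bar> \<le> log_dist z w"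
  unfolding log_dist_def by (rule Max_ge) auto

lemma log_dist_le_iff: "log_dist z w \<le> t \<longleftrightarrow> (\<forall>i. \<bar>ln (z $ i) - ln (w $ i)\<bar> \<le> t)"
  unfolding log_dist_def by (subst Max_le_iff) auto

lemma log_dist_less_iff: "log_dist z w < t \<longleftrightarrow> (\<forall>i. \<bar>ln (z $ i) - ln (w $ i)\<bar> < t)"
  unfolding log_dist_def by (subst Max_less_iff) auto

lemma abs_ln_diff_le_iff:
  fixes a b D :: real
  assumes "a > 0" "b > 0"
  shows "\<bar>ln a - ln b\<bar> \<le> D \<longleftrightarrow> a \<le> exp D * b \<and> b \<le> exp D * a"
proof -
  have "a \<le> exp D * b \<longleftrightarrow> ln a \<le> D + ln b" and "b \<le> exp D * a \<longleftrightarrow> ln b \<le> D + ln a"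
    using assms by (subst ln_le_cancel_iff[symmetric]; simp add: ln_mult)+
  then show ?thesis by linarith
qed

lemma log_dist_le_iff_scaled_le:
  assumes "z \<in> pos_orthant" "w \<in> pos_orthant"
  shows "log_dist z w \<le> D \<longleftrightarrow> (\<forall>i. z $ i \<le> exp D * w $ i \<and> w $ i \<le> exp D * z $ i)"
  using assms abs_ln_diff_le_iff by (simp add: log_dist_le_iff pos_orthant_def)

lemma thompson_dist_eq_log_dist:
  assumes z: "z \<in> pos_orthant" and w: "w \<in> pos_orthant"
  shows "thompson_dist z w = log_dist z w"
proof -
  have zp: "\<And>i. z $ i > 0" and wp: "\<And>i. w $ i > 0"
    using z w by (auto simp: pos_orthant_def)
  define M where "M = max (Max (range (\<lambda>i. z $ i / w $ i))) (Max (range (\<lambda>i. w $ i / z $ i)))"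
  have ratios_le: "z $ i / w $ i \<le> M \<and> w $ i / z $ i \<le> M" for i
    unfolding M_def by (intro conjI max.coboundedI1 max.coboundedI2 Max_ge) auto
  have "M \<in> range (\<lambda>i. z $ i / w $ i) \<union> range (\<lambda>i. w $ i / z $ i)"
    unfolding M_def max_def by (auto intro: Max_in)
  then obtain i where i: "M = z $ i / w $ i \<or> M = w $ i / z $ i"
    by blast
  then have M_pos: "M > 0"
    using zp[of i] wp[of i] by auto
  have "ln M \<le> \<bar>ln (z $ i) - ln (w $ i)\<bar>"
    using i zp[of i] wp[of i] by (auto simp: ln_div)
  also have "\<dots> \<le> log_dist z w"
    by (rule abs_ln_diff_le_log_dist)
  finally have "ln M \<le> log_dist z w" .
  moreover have "log_dist z w \<le> ln M"
    using ratios_le zp wp M_pos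
    by (simp add: log_dist_le_iff_scaled_le[OF z w] divide_le_eq mult.commute)
  ultimately show ?thesis
    by (simp add: thompson_dist_def M_def[symmetric])
qed

lemma Metric_space_log_dist: "Metric_space pos_orthant log_dist"
proof
  fix x y z :: "real^'n"
  show nonneg: "0 \<le> log_dist x y" for x y :: "real^'n"
    using abs_ln_diff_le_log_dist[of x _ y] abs_ge_zero order_trans by blast
  show "log_dist x y = log_dist y x"
    unfolding log_dist_def by (simp add: abs_minus_commute)
  have "\<bar>ln (x $ i) - ln (z $ i)\<bar> \<le> log_dist x y + log_dist y z" for i
    using abs_ln_diff_le_log_dist[of x i y] abs_ln_diff_le_log_dist[of y i z] by linarith
  then show "log_dist x z \<le> log_dist x y + log_dist y z"
    by (simp add: log_dist_le_iff)
  assume "x \<in> pos_orthant" "y \<in> pos_orthant"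
  show "log_dist x y = 0 \<longleftrightarrow> x = y"
  proof
    assume "log_dist x y = 0"
    then have "\<forall>i. ln (x $ i) = ln (y $ i)"
      using log_dist_le_iff[of x y 0] by simp
    with \<open>x \<in> pos_orthant\<close> \<open>y \<in> pos_orthant\<close> show "x = y"
      by (simp add: pos_orthant_def vec_eq_iff)
  next
    assume "x = y"
    then show "log_dist x y = 0"
      using nonneg[of y y] log_dist_le_iff[of y y 0] by simp
  qed
qed

lemma mcomplete_log_dist: "Metric_space.mcomplete (pos_orthant :: (real^'n::finite) set) log_dist"
proof -
  interpret Metric_space "pos_orthant :: (real^'n) set" log_dist
    by (rule Metric_space_log_dist)
  show ?thesis
    unfolding mcomplete_def
  proof (intro allI impI)
    fix \<sigma> :: "nat \<Rightarrow> real^'n"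
    assume Cauchy_\<sigma>: "MCauchy \<sigma>"
    have "Cauchy (\<lambda>n. ln (\<sigma> n $ i))" for i
    proof (rule metric_CauchyI)
      fix e :: real
      assume "e > 0"
      then obtain N where "\<forall>n n'. N \<le> n \<longrightarrow> N \<le> n' \<longrightarrow> log_dist (\<sigma> n) (\<sigma> n') < e"
        using Cauchy_\<sigma> by (auto simp: MCauchy_def)
      then show "\<exists>M. \<forall>m\<ge>M. \<forall>n\<ge>M. dist (ln (\<sigma> m $ i)) (ln (\<sigma> n $ i)) < e"
        using abs_ln_diff_le_log_dist[of "\<sigma> _" i "\<sigma> _"] by (metis dist_real_def le_less_trans)
    qed
    then obtain l where l: "\<And>i. (\<lambda>n. ln (\<sigma> n $ i)) \<longlonglongrightarrow> l i"
      unfolding Cauchy_convergent_iff convergent_def by metis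
    define x where "x = (\<chi> i. exp (l i))"
    have "limitin mtopology \<sigma> x sequentially"
      unfolding limitin_metric
    proof (intro conjI allI impI)
      show "x \<in> pos_orthant"
        by (simp add: x_def pos_orthant_def)
      fix e :: real
      assume "e > 0"
      have "\<forall>\<^sub>F n in sequentially. \<forall>i. \<bar>ln (\<sigma> n $ i) - ln (x $ i)\<bar> < e"
        using tendstoD[OF l \<open>e > 0\<close>]
        by (intro eventually_all_finite) (simp add: x_def dist_real_def)
      then show "\<forall>\<^sub>F n in sequentially. \<sigma> n \<in> pos_orthant \<and> log_dist (\<sigma> n) x < e"
        using Cauchy_\<sigma> by (simp add: MCauchy_def log_dist_less_iff image_subset_iff)
    qed
    then show "\<exists>x. limitin mtopology \<sigma> x sequentially"
      by blast
  qed
qed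

lemma log_dist_contraction_unique_fixpoint:
  fixes f :: "real^'n::finite \<Rightarrow> real^'n"
  assumes maps: "f \<in> pos_orthant \<rightarrow> pos_orthant" and "c < 1"
    and contr: "\<And>z w. z \<in> pos_orthant \<Longrightarrow> w \<in> pos_orthant \<Longrightarrow>
                       log_dist (f z) (f w) \<le> c * log_dist z w"
  shows "\<exists>!z. z \<in> pos_orthant \<and> f z = z"
proof -
  interpret Metric_space "pos_orthant :: (real^'n) set" log_dist
    by (rule Metric_space_log_dist)
  have "(\<chi> i. 1) \<in> pos_orthant"
    by (simp add: pos_orthant_def)
  then obtain z where "z \<in> pos_orthant" "f z = z"
    using Banach_fixedpoint_thm[OF mcomplete_log_dist _ maps \<open>c < 1\<close> contr] by blast
  then show ?thesis
    using contraction_imp_unique_fixpoint[OF _ _ maps \<open>c < 1\<close> contr] by blast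
qed

lemma log_dist_powr_divide_le:
  assumes a: "\<forall>j. a $ j > 0" and u: "u \<in> pos_orthant" and v: "v \<in> pos_orthant" and "c \<ge> 0"
  shows "log_dist (\<chi> j. (a $ j / u $ j) powr c) (\<chi> j. (a $ j / v $ j) powr c) \<le> c * log_dist u v"
  unfolding log_dist_le_iff
proof
  fix j
  have "u $ j > 0" "v $ j > 0"
    using u v by (auto simp: pos_orthant_def)
  then have "\<bar>ln ((a $ j / u $ j) powr c) - ln ((a $ j / v $ j) powr c)\<bar>
      = c * \<bar>ln (u $ j) - ln (v $ j)\<bar>"
    using a[rule_format, of j] \<open>c \<ge> 0\<close>
    by (simp add: ln_powr ln_div abs_mult right_diff_distrib[symmetric] abs_minus_commute)
  also have "\<dots> \<le> c * log_dist u v"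
    using \<open>c \<ge> 0\<close> abs_ln_diff_le_log_dist by (rule mult_left_mono[rotated])
  finally show "\<bar>ln ((\<chi> j. (a $ j / u $ j) powr c) $ j) - ln ((\<chi> j. (a $ j / v $ j) powr c) $ j)\<bar>
      \<le> c * log_dist u v"
    by simp
qed

lemma matrix_vector_mult_le_scaled:
  fixes A :: "real^'n::finite^'m"
  assumes "\<forall>i j. A $ i $ j \<ge> 0" and "\<forall>j. x $ j \<le> k * y $ j"
  shows "(A *v x) $ i \<le> k * (A *v y) $ i"
proof -
  have "(\<Sum>j\<in>UNIV. A $ i $ j * x $ j) \<le> (\<Sum>j\<in>UNIV. k * (A $ i $ j * y $ j))"
    by (rule sum_mono) (metis assms mult_left_mono mult.left_commute)
  then show ?thesis
    by (simp add: matrix_vector_mult_def sum_distrib_left)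
qed

lemma matrix_vector_mult_pos:
  fixes G :: "real^'n::finite^'m"
  assumes "\<forall>i j. G $ i $ j > 0" and "z \<in> pos_orthant"
  shows "(G *v z) $ i > 0"
  using assms unfolding matrix_vector_mult_def pos_orthant_def by (auto intro!: sum_pos)

definition sinkhorn_update :: "real^'n::finite^'n \<Rightarrow> real^'n \<Rightarrow> real^'n \<Rightarrow> real^'n" where
  "sinkhorn_update G \<rho> z = transpose G *v (\<chi> i. \<rho> $ i / (G *v z) $ i)"

lemma sinkhorn_update_pos:
  assumes G: "\<forall>i j. G $ i $ j > 0" and \<rho>: "\<forall>i. \<rho> $ i \<ge> 0" "\<rho> \<noteq> 0" and z: "z \<in> pos_orthant"
  shows "sinkhorn_update G \<rho> z \<in> pos_orthant"
  unfolding pos_orthant_def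
proof (intro CollectI allI)
  fix j
  obtain k where "\<rho> $ k \<noteq> 0"
    using \<rho>(2) by (auto simp: vec_eq_iff)
  then have k: "\<rho> $ k > 0"
    using \<rho>(1) by (simp add: order_less_le)
  have Gz: "\<And>i. (G *v z) $ i > 0"
    using matrix_vector_mult_pos[OF G z] .
  have "0 < G $ k $ j * (\<rho> $ k / (G *v z) $ k)"
    using G k Gz[of k] by simp
  also have "\<dots> \<le> (\<Sum>i\<in>UNIV. G $ i $ j * (\<rho> $ i / (G *v z) $ i))"
    using G \<rho>(1) Gz by (intro member_le_sum) (auto simp: less_imp_le)
  finally show "sinkhorn_update G \<rho> z $ j > 0"
    by (simp add: sinkhorn_update_def matrix_vector_mult_def transpose_def)
qed

lemma sinkhorn_update_le_scaled:
  assumes G: "\<forall>i j. G $ i $ j > 0" and \<rho>: "\<forall>i. \<rho> $ i \<ge> 0"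
    and z: "z \<in> pos_orthant" and w: "w \<in> pos_orthant" and wz: "\<forall>i. w $ i \<le> k * z $ i"
  shows "sinkhorn_update G \<rho> z $ j \<le> k * sinkhorn_update G \<rho> w $ j"
  unfolding sinkhorn_update_def
proof (rule matrix_vector_mult_le_scaled)
  show "\<forall>i j. 0 \<le> transpose G $ i $ j"
    using G by (simp add: transpose_def less_imp_le)
  show "\<forall>i. (\<chi> i. \<rho> $ i / (G *v z) $ i) $ i \<le> k * (\<chi> i. \<rho> $ i / (G *v w) $ i) $ i"
  proof
    fix i
    have "(G *v z) $ i > 0" "(G *v w) $ i > 0"
      using matrix_vector_mult_pos G z w by blast+
    moreover have "(G *v w) $ i \<le> k * (G *v z) $ i"
      using G wz by (intro matrix_vector_mult_le_scaled) (auto simp: less_imp_le)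
    then have "\<rho> $ i * (G *v w) $ i \<le> \<rho> $ i * (k * (G *v z) $ i)"
      using \<rho> by (simp add: mult_left_mono)
    ultimately show "(\<chi> i. \<rho> $ i / (G *v z) $ i) $ i \<le> k * (\<chi> i. \<rho> $ i / (G *v w) $ i) $ i"
      by (simp add: field_simps)
  qed
qed

lemma log_dist_sinkhorn_update_le:
  assumes G: "\<forall>i j. G $ i $ j > 0" and \<rho>: "\<forall>i. \<rho> $ i \<ge> 0" "\<rho> \<noteq> 0"
    and z: "z \<in> pos_orthant" and w: "w \<in> pos_orthant"
  shows "log_dist (sinkhorn_update G \<rho> z) (sinkhorn_update G \<rho> w) \<le> log_dist z w"
proof -
  have "\<forall>i. z $ i \<le> exp (log_dist z w) * w $ i \<and> w $ i \<le> exp (log_dist z w) * z $ i"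
    using log_dist_le_iff_scaled_le[OF z w] by blast
  then show ?thesis
    using sinkhorn_update_le_scaled[OF G \<rho>(1) z w] sinkhorn_update_le_scaled[OF G \<rho>(1) w z]
    by (simp add: log_dist_le_iff_scaled_le sinkhorn_update_pos[OF G \<rho>] z w)
qed

lemma theta_map_eq:
  "theta_map h \<beta> \<epsilon> \<rho> \<psi> C z =
     (\<chi> j. (xi_vec \<beta> \<psi> $ j / sinkhorn_update (Gamma_mat \<epsilon> C) \<rho> z $ j) powr (1 / (1 + \<beta> * \<epsilon> / h)))"
  by (simp add: theta_map_def sinkhorn_update_def Let_def)

lemma Gamma_mat_pos: "\<forall>i j. Gamma_mat \<epsilon> C $ i $ j > 0"
  by (simp add: Gamma_mat_def)

lemma xi_vec_pos: "\<forall>j. xi_vec \<beta> \<psi> $ j > 0"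
  by (simp add: xi_vec_def)

lemma theta_map_pos:
  assumes "\<forall>i. \<rho> $ i \<ge> 0" "\<rho> \<noteq> 0" and "z \<in> pos_orthant"
  shows "theta_map h \<beta> \<epsilon> \<rho> \<psi> C z \<in> pos_orthant"
  using sinkhorn_update_pos[OF Gamma_mat_pos assms] xi_vec_pos[of \<beta> \<psi>]
  by (simp add: theta_map_eq pos_orthant_def less_imp_neq[symmetric])

lemma log_dist_theta_map_le:
  assumes "1 + \<beta> * \<epsilon> / h > 0" and \<rho>: "\<forall>i. \<rho> $ i \<ge> 0" "\<rho> \<noteq> 0"
    and z: "z \<in> pos_orthant" and w: "w \<in> pos_orthant"
  shows "log_dist (theta_map h \<beta> \<epsilon> \<rho> \<psi> C z) (theta_map h \<beta> \<epsilon> \<rho> \<psi> C w)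
           \<le> 1 / (1 + \<beta> * \<epsilon> / h) * log_dist z w"
proof -
  define c where "c = 1 / (1 + \<beta> * \<epsilon> / h)"
  define S where "S = sinkhorn_update (Gamma_mat \<epsilon> C) \<rho>"
  have "c \<ge> 0"
    using assms(1) by (simp add: c_def)
  have "log_dist (theta_map h \<beta> \<epsilon> \<rho> \<psi> C z) (theta_map h \<beta> \<epsilon> \<rho> \<psi> C w)
      \<le> c * log_dist (S z) (S w)"
    unfolding theta_map_eq c_def[symmetric] S_def
    using \<open>c \<ge> 0\<close> sinkhorn_update_pos[OF Gamma_mat_pos \<rho>] z w
    by (intro log_dist_powr_divide_le xi_vec_pos)
  also have "\<dots> \<le> c * log_dist z w"
    unfolding S_def
    using \<open>c \<ge> 0\<close> log_dist_sinkhorn_update_le[OF Gamma_mat_pos \<rho> z w] by (rule mult_left_mono[rotated])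
  finally show ?thesis
    unfolding c_def .
qed

theorem theorem2:
  fixes h \<beta> \<epsilon> :: real
    and \<rho> \<psi> :: "real^'n::finite"
    and C :: "real^'n^'n"
  assumes "h > 0" and "\<beta> > 0" and "\<epsilon> > 0"
    and "\<forall>i. \<rho> $ i \<ge> 0" and "(\<Sum>i\<in>UNIV. \<rho> $ i) = 1"
    and "\<forall>i j. C $ i $ j \<ge> 0"
  shows "(\<forall>z\<in>pos_orthant. theta_map h \<beta> \<epsilon> \<rho> \<psi> C z \<in> pos_orthant)
       \<and> (\<exists>c<1. \<forall>z\<in>pos_orthant. \<forall>w\<in>pos_orthant.
            thompson_dist (theta_map h \<beta> \<epsilon> \<rho> \<psi> C z) (theta_map h \<beta> \<epsilon> \<rho> \<psi> C w)
              \<le> c * thompson_dist z w)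
       \<and> (\<exists>!z. z \<in> pos_orthant \<and> theta_map h \<beta> \<epsilon> \<rho> \<psi> C z = z)"
proof -
  define f where "f = theta_map h \<beta> \<epsilon> \<rho> \<psi> C"
  define c where "c = 1 / (1 + \<beta> * \<epsilon> / h)"
  have "\<beta> * \<epsilon> / h > 0"
    using assms(1-3) by simp
  then have "1 + \<beta> * \<epsilon> / h > 0" and "c < 1"
    by (simp_all add: c_def)
  have "\<rho> \<noteq> 0"
    using assms(5) by auto
  then have maps: "f \<in> pos_orthant \<rightarrow> pos_orthant"
    unfolding f_def using theta_map_pos[OF assms(4)] by blast
  have contr: "log_dist (f z) (f w) \<le> c * log_dist z w"
    if "z \<in> pos_orthant" "w \<in> pos_orthant" for z w
    unfolding f_def c_def
    using log_dist_theta_map_le[OF \<open>1 + \<beta> * \<epsilon> / h > 0\<close> assms(4) \<open>\<rho> \<noteq> 0\<close> that] .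
  have "\<forall>z\<in>pos_orthant. \<forall>w\<in>pos_orthant. thompson_dist (f z) (f w) \<le> c * thompson_dist z w"
    using contr maps by (simp add: Pi_iff thompson_dist_eq_log_dist)
  then show ?thesis
    unfolding f_def[symmetric]
    using maps \<open>c < 1\<close> log_dist_contraction_unique_fixpoint[OF maps \<open>c < 1\<close> contr] by blast
qed

end
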